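(* An element $a\in C\ell_{1,2}$ is invertible (i.e. there exists $b\in C\ell_{1,2}$ with $ab=ba=1$) if and only if $P(a)\neq 0$, and in this case $$a^{-1}=\frac{N(a)-2T(a)e_7}{P(a)}\,\bar a.$$
   Context: $C\ell_{1,2}$ is the real Clifford algebra generated by $i_1,i_2,i_3$ with $i_1^2=1$, $i_2^2=i_3^2=-1$ and $i_ti_m=-i_mi_t$ for $t\neq m$, with real basis $e_0=1$, $e_1=i_1$, $e_2=i_2$, $e_3=i_1i_2$, $e_4=i_3$, $e_5=i_1i_3$, $e_6=i_2i_3$, $e_7=i_1i_2i_3$. For $a=\sum_{t=0}^7 a_te_t$ define $\bar a=a_0-a_1e_1-a_2e_2-a_3e_3-a_4e_4-a_5e_5-a_6e_6+a_7e_7$, $N(a)=a_0^2-a_1^2+a_2^2-a_3^2+a_4^2-a_5^2+a_6^2-a_7^2$, $T(a)=a_0a_7+a_2a_5-a_1a_6-a_3a_4$, $P(a)=N(a)^2+4T(a)^2$. *)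

theory Defs
  imports Complex_Main
begin

text \<open>Elements of the real Clifford algebra Cl(1,2): real coordinates with respect to
  the basis e_0,...,e_7.  The basis index t, written in binary, records which generators
  occur: bit 0 = i_1, bit 1 = i_2, bit 2 = i_3 (so e_3 = i_1 i_2, e_5 = i_1 i_3,
  e_6 = i_2 i_3, e_7 = i_1 i_2 i_3), in increasing order of generators.\<close>

datatype cl12 = Cl real real real real real real real real

fun coef :: "cl12 \<Rightarrow> nat \<Rightarrow> real" where
  "coef (Cl a0 a1 a2 a3 a4 a5 a6 a7) t =
     (if t = 0 then a0 else if t = 1 then a1 else if t = 2 then a2 else if t = 3 then a3
      else if t = 4 then a4 else if t = 5 then a5 else if t = 6 then a6
      else if t = 7 then a7 else 0)"

definition mk :: "(nat \<Rightarrow> real) \<Rightarrow> cl12" where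
  "mk f = Cl (f 0) (f 1) (f 2) (f 3) (f 4) (f 5) (f 6) (f 7)"

definition gen_sq :: "nat \<Rightarrow> real" where
  "gen_sq p = (if p = 0 then 1 else -1)"

text \<open>Sign in e_i e_j = blade_sign i j * e_(i xor j): reorder using anticommutation
  (one sign per pair of generator p in e_i and q in e_j with q < p) and then contract
  the repeated generators using their squares.\<close>
definition blade_sign :: "nat \<Rightarrow> nat \<Rightarrow> real" where
  "blade_sign i j =
     (-1) ^ card {(p, q). p < 3 \<and> q < 3 \<and> bit i p \<and> bit j q \<and> q < p}
     * (\<Prod>p\<in>{p. p < 3 \<and> bit i p \<and> bit j p}. gen_sq p)"

definition basis :: "nat \<Rightarrow> cl12" where
  "basis t = mk (\<lambda>k. if k = t then 1 else 0)"

definition cl_one :: cl12 where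
  "cl_one = basis 0"

definition cl_mult :: "cl12 \<Rightarrow> cl12 \<Rightarrow> cl12" where
  "cl_mult a b = mk (\<lambda>k. \<Sum>i<8. \<Sum>j<8.
      (if xor i j = k then blade_sign i j * coef a i * coef b j else 0))"

definition cl_add :: "cl12 \<Rightarrow> cl12 \<Rightarrow> cl12" where
  "cl_add a b = mk (\<lambda>k. coef a k + coef b k)"

definition cl_scale :: "real \<Rightarrow> cl12 \<Rightarrow> cl12" where
  "cl_scale r a = mk (\<lambda>k. r * coef a k)"

definition cl_conj :: "cl12 \<Rightarrow> cl12" where
  "cl_conj a = mk (\<lambda>t. if t = 0 \<or> t = 7 then coef a t else - coef a t)"

definition cl_N :: "cl12 \<Rightarrow> real" where
  "cl_N a = (coef a 0)^2 - (coef a 1)^2 + (coef a 2)^2 - (coef a 3)^2 + (coef a 4)^2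
            - (coef a 5)^2 + (coef a 6)^2 - (coef a 7)^2"

definition cl_T :: "cl12 \<Rightarrow> real" where
  "cl_T a = coef a 0 * coef a 7 + coef a 2 * coef a 5 - coef a 1 * coef a 6 - coef a 3 * coef a 4"

definition cl_P :: "cl12 \<Rightarrow> real" where
  "cl_P a = (cl_N a)^2 + 4 * (cl_T a)^2"

end

theory Submission
  imports Defs
begin

text \<open>Writing \<open>a\<^sup>*\<close> for the conjugate \<open>cl_conj a\<close>, multiplying out gives
  \<open>a a\<^sup>* = a\<^sup>* a = N(a) + 2 T(a) e\<^sub>7\<close>, and \<open>e\<^sub>7\<close> is central with \<open>e\<^sub>7\<^sup>2 = -1\<close>,
  so multiplying further by \<open>N(a) - 2 T(a) e\<^sub>7\<close> leaves the real scalar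
  \<open>N(a)\<^sup>2 + 4 T(a)\<^sup>2 = P(a)\<close>. Conversely, if \<open>P(a) = 0\<close> then \<open>N(a) = T(a) = 0\<close>, so
  \<open>a a\<^sup>* = 0\<close>; a left inverse of \<open>a\<close> would then force \<open>a\<^sup>* = 0\<close>, i.e. \<open>a = 0\<close>.\<close>

text \<open>With the index sets of \<open>blade_sign\<close> turned into products over \<open>{..<3}\<close>,
  the simplifier evaluates all 64 signs, and hence the multiplication table.\<close>

lemma blade_sign_eq_prod:
  "blade_sign i j =
     (\<Prod>p<3. \<Prod>q<3. if bit i p \<and> bit j q \<and> q < p then -1 else 1)
     * (\<Prod>p<3. if bit i p \<and> bit j p then gen_sq p else 1)"
proof -
  let ?swap = "\<lambda>(p, q). bit i p \<and> bit j q \<and> q < p"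
  have swaps: "{(p, q). p < 3 \<and> q < 3 \<and> bit i p \<and> bit j q \<and> q < p}
      = {x \<in> {..<3::nat} \<times> {..<3}. ?swap x}"
    by auto
  have "(-1::real) ^ card ({x \<in> {..<3::nat} \<times> {..<3}. ?swap x})
      = (\<Prod>x\<in>{..<3::nat} \<times> {..<3}. if ?swap x then -1 else 1)"
    by (subst prod.inter_filter[symmetric]) simp_all
  also have "\<dots> = (\<Prod>p<3. \<Prod>q<3. if bit i p \<and> bit j q \<and> q < p then -1 else 1)"
    by (subst prod.cartesian_product) (simp add: split_def)
  finally have sign: "(-1::real) ^ card {(p, q). p < 3 \<and> q < 3 \<and> bit i p \<and> bit j q \<and> q < p}
      = (\<Prod>p<3. \<Prod>q<3. if bit i p \<and> bit j q \<and> q < p then -1 else 1)"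
    unfolding swaps .
  have contractions: "{p. p < 3 \<and> bit i p \<and> bit j p} = {p \<in> {..<3::nat}. bit i p \<and> bit j p}"
    by auto
  have squares: "(\<Prod>p\<in>{p. p < 3 \<and> bit i p \<and> bit j p}. gen_sq p)
      = (\<Prod>p<3. if bit i p \<and> bit j p then gen_sq p else 1)"
    unfolding contractions by (rule prod.inter_filter) simp
  show ?thesis
    unfolding blade_sign_def sign squares ..
qed

lemma cl_mult_Cl:
  "cl_mult (Cl a0 a1 a2 a3 a4 a5 a6 a7) (Cl b0 b1 b2 b3 b4 b5 b6 b7) = Cl
     (a0*b0 + a1*b1 - a2*b2 + a3*b3 - a4*b4 + a5*b5 - a6*b6 - a7*b7)
     (a0*b1 + a1*b0 + a2*b3 - a3*b2 + a4*b5 - a5*b4 - a6*b7 - a7*b6)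
     (a0*b2 + a1*b3 + a2*b0 - a3*b1 + a4*b6 - a5*b7 - a6*b4 - a7*b5)
     (a0*b3 + a1*b2 - a2*b1 + a3*b0 - a4*b7 + a5*b6 - a6*b5 - a7*b4)
     (a0*b4 + a1*b5 - a2*b6 + a3*b7 + a4*b0 - a5*b1 + a6*b2 + a7*b3)
     (a0*b5 + a1*b4 + a2*b7 - a3*b6 - a4*b1 + a5*b0 + a6*b3 + a7*b2)
     (a0*b6 + a1*b7 + a2*b4 - a3*b5 - a4*b2 + a5*b3 + a6*b0 + a7*b1)
     (a0*b7 + a1*b6 - a2*b5 + a3*b4 + a4*b3 - a5*b2 + a6*b1 + a7*b0)"
  by (simp add: cl_mult_def mk_def blade_sign_eq_prod gen_sq_def lessThan_nat_numeral
      bit_1_iff bit_Suc_0_iff)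

lemma cl_one_Cl: "cl_one = Cl 1 0 0 0 0 0 0 0"
  by (simp add: cl_one_def basis_def mk_def)

lemma basis_7_Cl: "basis 7 = Cl 0 0 0 0 0 0 0 1"
  by (simp add: basis_def mk_def)

lemma cl_add_Cl:
  "cl_add (Cl a0 a1 a2 a3 a4 a5 a6 a7) (Cl b0 b1 b2 b3 b4 b5 b6 b7)
     = Cl (a0 + b0) (a1 + b1) (a2 + b2) (a3 + b3) (a4 + b4) (a5 + b5) (a6 + b6) (a7 + b7)"
  by (simp add: cl_add_def mk_def)

lemma cl_scale_Cl:
  "cl_scale r (Cl a0 a1 a2 a3 a4 a5 a6 a7)
     = Cl (r * a0) (r * a1) (r * a2) (r * a3) (r * a4) (r * a5) (r * a6) (r * a7)"
  by (simp add: cl_scale_def mk_def)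

lemma cl_conj_Cl:
  "cl_conj (Cl a0 a1 a2 a3 a4 a5 a6 a7) = Cl a0 (- a1) (- a2) (- a3) (- a4) (- a5) (- a6) a7"
  by (simp add: cl_conj_def mk_def)

lemma cl_N_Cl:
  "cl_N (Cl a0 a1 a2 a3 a4 a5 a6 a7)
     = a0\<^sup>2 - a1\<^sup>2 + a2\<^sup>2 - a3\<^sup>2 + a4\<^sup>2 - a5\<^sup>2 + a6\<^sup>2 - a7\<^sup>2"
  by (simp add: cl_N_def)

lemma cl_T_Cl: "cl_T (Cl a0 a1 a2 a3 a4 a5 a6 a7) = a0 * a7 + a2 * a5 - a1 * a6 - a3 * a4"
  by (simp add: cl_T_def)

lemmas cl_Cl_simps = cl_mult_Cl cl_one_Cl basis_7_Cl cl_add_Cl cl_scale_Cl cl_conj_Cl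
  cl_N_Cl cl_T_Cl

lemma cl_mult_assoc: "cl_mult (cl_mult a b) c = cl_mult a (cl_mult b c)"
  by (cases a; cases b; cases c) (simp add: cl_mult_Cl algebra_simps)

lemma cl_mult_one_left [simp]: "cl_mult cl_one a = a"
  by (cases a) (simp add: cl_Cl_simps)

lemma cl_mult_one_right [simp]: "cl_mult a cl_one = a"
  by (cases a) (simp add: cl_Cl_simps)

lemma cl_mult_zero_right [simp]: "cl_mult a (Cl 0 0 0 0 0 0 0 0) = Cl 0 0 0 0 0 0 0 0"
  by (cases a) (simp add: cl_mult_Cl)

lemma cl_mult_scale_left: "cl_mult (cl_scale r a) b = cl_scale r (cl_mult a b)"
  by (cases a; cases b) (simp add: cl_mult_Cl cl_scale_Cl algebra_simps)

lemma cl_mult_scale_right: "cl_mult a (cl_scale r b) = cl_scale r (cl_mult a b)"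
  by (cases a; cases b) (simp add: cl_mult_Cl cl_scale_Cl algebra_simps)

lemma cl_scale_one_left [simp]: "cl_scale 1 a = a"
  by (cases a) (simp add: cl_scale_Cl)

lemma cl_scale_scale [simp]: "cl_scale r (cl_scale s a) = cl_scale (r * s) a"
  by (cases a) (simp add: cl_scale_Cl)

lemma cl_conj_eq_zero_iff [simp]:
  "cl_conj a = Cl 0 0 0 0 0 0 0 0 \<longleftrightarrow> a = Cl 0 0 0 0 0 0 0 0"
  by (cases a) (simp add: cl_conj_Cl)

lemma left_inverse_eq_right_inverse:
  assumes "cl_mult b a = cl_one" and "cl_mult a c = cl_one"
  shows "b = c"
proof -
  have "b = cl_mult b (cl_mult a c)"
    using assms(2) by simp
  also have "\<dots> = c"
    using assms(1) by (simp flip: cl_mult_assoc)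
  finally show ?thesis .
qed

lemma cl_mult_conj_right:
  "cl_mult a (cl_conj a) = cl_add (cl_scale (cl_N a) cl_one) (cl_scale (2 * cl_T a) (basis 7))"
  by (cases a) (simp add: cl_Cl_simps algebra_simps power2_eq_square)

lemma cl_P_eq_0_iff: "cl_P a = 0 \<longleftrightarrow> cl_N a = 0 \<and> cl_T a = 0"
  by (simp add: cl_P_def add_nonneg_eq_0_iff)

lemma cl_mult_left_inverse_imp_P_neq_0:
  assumes "cl_mult b a = cl_one"
  shows "cl_P a \<noteq> 0"
proof
  assume "cl_P a = 0"
  then have zero_divisor: "cl_mult a (cl_conj a) = Cl 0 0 0 0 0 0 0 0"
    by (simp add: cl_P_eq_0_iff cl_mult_conj_right cl_Cl_simps)
  have "cl_conj a = cl_mult (cl_mult b a) (cl_conj a)"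
    using assms by simp
  also have "\<dots> = Cl 0 0 0 0 0 0 0 0"
    by (simp add: cl_mult_assoc zero_divisor)
  finally have "a = Cl 0 0 0 0 0 0 0 0"
    by simp
  then show False
    using assms by (simp add: cl_one_Cl)
qed

definition cl_adj :: "cl12 \<Rightarrow> cl12" where
  "cl_adj a = cl_mult (cl_add (cl_scale (cl_N a) cl_one) (cl_scale (- 2 * cl_T a) (basis 7)))
                (cl_conj a)"

lemma cl_mult_adj_right: "cl_mult a (cl_adj a) = cl_scale (cl_P a) cl_one"
  by (cases a) (simp add: cl_adj_def cl_P_def cl_Cl_simps algebra_simps power2_eq_square)

lemma cl_mult_adj_left: "cl_mult (cl_adj a) a = cl_scale (cl_P a) cl_one"
  by (cases a) (simp add: cl_adj_def cl_P_def cl_Cl_simps algebra_simps power2_eq_square)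

lemma cl_inverse_adj:
  assumes "cl_P a \<noteq> 0"
  shows "cl_mult a (cl_scale (1 / cl_P a) (cl_adj a)) = cl_one"
    and "cl_mult (cl_scale (1 / cl_P a) (cl_adj a)) a = cl_one"
  using assms
  by (simp_all add: cl_mult_scale_left cl_mult_scale_right cl_mult_adj_left cl_mult_adj_right)

theorem proposition2p7:
  fixes a :: cl12
  shows "((\<exists>b. cl_mult a b = cl_one \<and> cl_mult b a = cl_one) \<longleftrightarrow> cl_P a \<noteq> 0)
    \<and> (cl_P a \<noteq> 0 \<longrightarrow>
        (let inv = cl_mult (cl_scale (1 / cl_P a)
                      (cl_add (cl_scale (cl_N a) cl_one) (cl_scale (- 2 * cl_T a) (basis 7))))
                    (cl_conj a)
         in cl_mult a inv = cl_one \<and> cl_mult inv a = cl_one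
            \<and> (\<forall>b. cl_mult a b = cl_one \<and> cl_mult b a = cl_one \<longrightarrow> b = inv)))"
proof -
  have inv: "cl_mult (cl_scale (1 / cl_P a)
               (cl_add (cl_scale (cl_N a) cl_one) (cl_scale (- 2 * cl_T a) (basis 7))))
             (cl_conj a) = cl_scale (1 / cl_P a) (cl_adj a)"
    by (simp add: cl_adj_def cl_mult_scale_left)
  show ?thesis
    unfolding inv Let_def
    using cl_inverse_adj cl_mult_left_inverse_imp_P_neq_0 left_inverse_eq_right_inverse
    by metis
qed

end
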